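(* Let $e\ge2$, $\mathfrak{g}=\widehat{\mathfrak{sl}}_e$, $\Lambda$ a dominant integral weight, and $\mathcal{C}$ a categorical module over $\mathfrak{g}$ whose support equals the support of $V(\Lambda)$. Let $\mu=\Lambda-\sum_{r=1}^e b_r\alpha_r$ be a dominant weight in the support, and for distinct $i,j$ define $b_{ij}=\min(\{b_r-1\}_{r\in[i,j-1]}\cup\{b_r\}_{r\notin[i,j-1]})$ if $i<j$, and $b_{ij}=\min(\{b_r+1\}_{r\in[j,i-1]}\cup\{b_r\}_{r\notin[j,i-1]})$ if $j<i$. Then $k^+_{ij}\le b_{ij}$, with equality if $\mu+\alpha_{ij;n}$ is dominant for all $i,j,n$.
   Context: For $\widehat{\mathfrak{sl}}_e$: simple roots $\alpha_r=\epsilon_r-\epsilon_{r+1}$ for $1\le r\le e-1$ and $\alpha_e=\epsilon_e-\epsilon_1+\delta$, $\delta=\alpha_1+\dots+\alpha_e$. The positive real roots are $\alpha_{ij;n}=\epsilon_i-\epsilon_j+n\delta$ for distinct $i,j\in\{1,\dots,e\}$ with $n\ge0$ if $i<j$ and $n\ge1$ if $i>j$. A categorical module is a representation of the Khovanov–Lauda–Rouquier 2-category (abelian categories $\mathcal{C}_\lambda$ with exact functors $\mathcal{E}_i,\mathcal{F}_i$ shifting weight by $\pm\alpha_i$, etc.); its support is $\{\lambda:\mathcal{C}_\lambda\neq0\}$. $N_\mu=\{\alpha\text{ positive real root}:\mathcal{C}_{\mu+\alpha}\neq0\}$; for $i<j$, $k^+_{ij}=\max(\{-1\}\cup\{n:\alpha_{ij;n}\in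 N_\mu\})$, and for $i>j$, $k^+_{ij}=\max(\{0\}\cup\{n:\alpha_{ij;n}\in N_\mu\})$. $[a,b]$ denotes the integer interval. *)

theory Defs
  imports Main
begin

text \<open>Weights of the form Lambda - sum_r b_r alpha_r (r = 1..e) are encoded by the
coefficient function b :: nat => int (normalised to 0 outside 1..e).
The dominant integral weight Lambda is encoded by Lam i = <Lambda, h_i>, i = 1..e.\<close>

definition cartan :: "nat \<Rightarrow> nat \<Rightarrow> nat \<Rightarrow> int" where
  "cartan e i j =
     (if i = j then 2
      else if e = 2 then -2
      else if j = i + 1 \<or> i = j + 1 \<or> (i = 1 \<and> j = e) \<or> (i = e \<and> j = 1) then -1
      else 0)"

definition pairing :: "nat \<Rightarrow> (nat \<Rightarrow> int) \<Rightarrow> (nat \<Rightarrow> int) \<Rightarrow> nat \<Rightarrow> int" where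
  "pairing e Lam b i = Lam i - (\<Sum>r\<in>{1..e}. cartan e i r * b r)"

definition dominant :: "nat \<Rightarrow> (nat \<Rightarrow> int) \<Rightarrow> (nat \<Rightarrow> int) \<Rightarrow> bool" where
  "dominant e Lam b \<longleftrightarrow> (\<forall>i\<in>{1..e}. pairing e Lam b i \<ge> 0)"

text \<open>simple reflection s_i(lambda) = lambda - <lambda,h_i> alpha_i\<close>
definition srefl :: "nat \<Rightarrow> (nat \<Rightarrow> int) \<Rightarrow> nat \<Rightarrow> (nat \<Rightarrow> int) \<Rightarrow> (nat \<Rightarrow> int)" where
  "srefl e Lam i b = b(i := b i + pairing e Lam b i)"

text \<open>Support (set of weights) of V(Lambda): the Weyl group orbits of the dominant
weights mu \<le> Lambda (Kac, Infinite dimensional Lie algebras, Prop. 11.2 / 12.5).\<close>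
inductive_set Vsupp :: "nat \<Rightarrow> (nat \<Rightarrow> int) \<Rightarrow> (nat \<Rightarrow> int) set" for e Lam where
  base: "\<lbrakk>\<forall>r\<in>{1..e}. b r \<ge> 0; \<forall>r. r \<notin> {1..e} \<longrightarrow> b r = 0; dominant e Lam b\<rbrakk>
           \<Longrightarrow> b \<in> Vsupp e Lam"
| refl: "\<lbrakk>b \<in> Vsupp e Lam; i \<in> {1..e}\<rbrakk> \<Longrightarrow> srefl e Lam i b \<in> Vsupp e Lam"

text \<open>positive real roots alpha_{ij;n} = eps_i - eps_j + n delta\<close>
definition pos_real_root :: "nat \<Rightarrow> nat \<Rightarrow> nat \<Rightarrow> int \<Rightarrow> bool" where
  "pos_real_root e i j n \<longleftrightarrow> i \<in> {1..e} \<and> j \<in> {1..e} \<and> i \<noteq> j \<and>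
     (if i < j then n \<ge> 0 else n \<ge> 1)"

text \<open>coefficient of alpha_r in alpha_{ij;n}\<close>
definition root_coeff :: "nat \<Rightarrow> nat \<Rightarrow> nat \<Rightarrow> int \<Rightarrow> nat \<Rightarrow> int" where
  "root_coeff e i j n r =
     (if r \<notin> {1..e} then 0
      else if i < j then n + (if r \<in> {i..j-1} then 1 else 0)
      else n - (if r \<in> {j..i-1} then 1 else 0))"

text \<open>mu + alpha_{ij;n}, with mu = Lambda - sum b_r alpha_r\<close>
definition shift :: "nat \<Rightarrow> (nat \<Rightarrow> int) \<Rightarrow> nat \<Rightarrow> nat \<Rightarrow> int \<Rightarrow> (nat \<Rightarrow> int)" where
  "shift e b i j n = (\<lambda>r. b r - root_coeff e i j n r)"

definition kplus :: "(nat \<Rightarrow> int) set \<Rightarrow> nat \<Rightarrow> (nat \<Rightarrow> int) \<Rightarrow> nat \<Rightarrow> nat \<Rightarrow> int" where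
  "kplus S e b i j =
     Max ({if i < j then -1 else 0} \<union> {n. pos_real_root e i j n \<and> shift e b i j n \<in> S})"

definition bij :: "nat \<Rightarrow> (nat \<Rightarrow> int) \<Rightarrow> nat \<Rightarrow> nat \<Rightarrow> int" where
  "bij e b i j =
     (if i < j then Min ((\<lambda>r. b r - 1) ` {i..j-1} \<union> b ` ({1..e} - {i..j-1}))
      else Min ((\<lambda>r. b r + 1) ` {j..i-1} \<union> b ` ({1..e} - {j..i-1})))"

end

theory Submission
  imports Defs "HOL-Library.Multiset" "HOL-Combinatorics.Transposition"
begin

text \<open>Everything rests on one fact: every weight \<open>\<lambda> = \<Lambda> - \<Sum> b\<^sub>r \<alpha>\<^sub>r\<close> in the Weyl group orbit
  of a dominant \<open>\<mu> \<le> \<Lambda>\<close> satisfies \<open>\<lambda> \<le> \<Lambda>\<close>, i.e. all \<open>b\<^sub>r \<ge> 0\<close>. Granting it,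
  \<open>\<mu> + \<alpha>\<^sub>i\<^sub>j\<^sub>;\<^sub>n\<close> lies in the support only if \<open>n \<le> b\<^sub>i\<^sub>j\<close>, and for \<open>n = b\<^sub>i\<^sub>j\<close> it does
  whenever it is dominant.

  For the fact we pass to the \<open>\<epsilon>\<close>-coordinates \<open>y\<^sub>1, \<dots>, y\<^sub>e\<close> of \<open>\<lambda>\<close> at level \<open>k = \<Sum> \<Lambda>\<^sub>r\<close>:
  \<open>s\<^sub>i\<close> (\<open>i < e\<close>) swaps \<open>y\<^sub>i\<close> and \<open>y\<^sub>i\<^sub>+\<^sub>1\<close>, and \<open>s\<^sub>e\<close> swaps \<open>y\<^sub>e\<close> and \<open>y\<^sub>1\<close> up to \<open>\<plusminus>k\<close>. Hence
  the multiset of the \<open>y\<^sub>r mod k\<close> and the norm \<open>|\<Lambda>|\<^sup>2 - |\<lambda>|\<^sup>2\<close> are orbit invariants.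
  Reflecting at an index where the pairing is negative raises \<open>\<lambda>\<close>; the invariant norm bounds
  the coefficients from below, so this ends at a dominant \<open>\<lambda>' \<ge> \<lambda>\<close> in the orbit. A dominant
  weight has \<open>y\<^sub>1 \<ge> \<dots> \<ge> y\<^sub>e \<ge> y\<^sub>1 - k\<close>, and such a \<open>y\<close> is determined by its residues
  mod \<open>k\<close> and its sum (which is the same for all weights); the norm then fixes the remaining
  \<open>\<delta>\<close>-component. So \<open>\<lambda>' = \<mu>\<close>, and \<open>\<lambda> \<le> \<mu> \<le> \<Lambda>\<close>. Level \<open>0\<close> is trivial: the orbit is a point.\<close>

definition cyc_succ :: "nat \<Rightarrow> nat \<Rightarrow> nat" where
  "cyc_succ e i = (if i = e then 1 else i + 1)"

definition cyc_pred :: "nat \<Rightarrow> nat \<Rightarrow> nat" where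
  "cyc_pred e i = (if i = 1 then e else i - 1)"

lemma cyc_succ_in: "e \<ge> 2 \<Longrightarrow> i \<in> {1..e} \<Longrightarrow> cyc_succ e i \<in> {1..e}"
  by (auto simp: cyc_succ_def)

lemma cyc_pred_in: "e \<ge> 2 \<Longrightarrow> i \<in> {1..e} \<Longrightarrow> cyc_pred e i \<in> {1..e}"
  by (auto simp: cyc_pred_def)

lemma cyc_succ_neq: "e \<ge> 2 \<Longrightarrow> i \<in> {1..e} \<Longrightarrow> cyc_succ e i \<noteq> i"
  by (auto simp: cyc_succ_def)

lemma cyc_pred_eq_iff:
  "e \<ge> 2 \<Longrightarrow> i \<in> {1..e} \<Longrightarrow> r \<in> {1..e} \<Longrightarrow> cyc_pred e r = i \<longleftrightarrow> r = cyc_succ e i"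
  by (auto simp: cyc_pred_def cyc_succ_def)

lemma bij_betw_cyc_pred: "e \<ge> 2 \<Longrightarrow> bij_betw (cyc_pred e) {1..e} {1..e}"
  by (rule bij_betw_byWitness[where f' = "cyc_succ e"]) (auto simp: cyc_pred_def cyc_succ_def)

lemma bij_betw_cyc_succ: "e \<ge> 2 \<Longrightarrow> bij_betw (cyc_succ e) {1..e} {1..e}"
  by (rule bij_betw_byWitness[where f' = "cyc_pred e"]) (auto simp: cyc_pred_def cyc_succ_def)

lemma sum_cyc_pred_reindex: "e \<ge> 2 \<Longrightarrow> (\<Sum>r\<in>{1..e}. f (cyc_pred e r)) = (\<Sum>r\<in>{1..e}. f r)"
  using sum.reindex_bij_betw[OF bij_betw_cyc_pred] by blast

lemma sum_cyc_succ_reindex: "e \<ge> 2 \<Longrightarrow> (\<Sum>r\<in>{1..e}. f (cyc_succ e r)) = (\<Sum>r\<in>{1..e}. f r)"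
  using sum.reindex_bij_betw[OF bij_betw_cyc_succ] by blast

lemma pairing_cyclic:
  assumes e: "e \<ge> 2" and i: "i \<in> {1..e}"
  shows "pairing e Lam b i = Lam i - 2 * b i + b (cyc_pred e i) + b (cyc_succ e i)"
proof (cases "e = 2")
  case True
  then have "i = 1 \<or> i = 2" using i by auto
  moreover have "{1..e} = {1, 2::nat}" using True by auto
  ultimately show ?thesis
    using True by (auto simp: pairing_def cartan_def cyc_pred_def cyc_succ_def numeral_2_eq_2)
next
  case False
  let ?N = "{i, cyc_pred e i, cyc_succ e i}"
  have distinct: "cyc_pred e i \<noteq> i" "cyc_succ e i \<noteq> i" "cyc_pred e i \<noteq> cyc_succ e i"
    using False e i by (auto simp: cyc_pred_def cyc_succ_def)
  have "(\<Sum>r\<in>{1..e}. cartan e i r * b r) = (\<Sum>r\<in>?N. cartan e i r * b r)"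
  proof (rule sum.mono_neutral_right)
    show "?N \<subseteq> {1..e}" using cyc_pred_in cyc_succ_in e i by auto
    show "\<forall>r\<in>{1..e} - ?N. cartan e i r * b r = 0"
      using False i by (auto simp: cartan_def cyc_pred_def cyc_succ_def)
  qed simp
  also have "\<dots> = 2 * b i - b (cyc_pred e i) - b (cyc_succ e i)"
    using distinct False e i by (auto simp: cartan_def cyc_pred_def cyc_succ_def)
  finally show ?thesis unfolding pairing_def by simp
qed

section \<open>Epsilon coordinates and invariants of the simple reflections\<close>

definition level :: "nat \<Rightarrow> (nat \<Rightarrow> int) \<Rightarrow> int" where
  "level e Lam = (\<Sum>r\<in>{1..e}. Lam r)"

text \<open>The \<open>\<epsilon>\<^sub>r\<close>-coordinate of \<open>\<Lambda> - \<Sum> b\<^sub>s \<alpha>\<^sub>s\<close>, modulo the centre and \<open>\<delta>\<close>, with the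
  fundamental weight \<open>\<omega>\<^sub>s\<close> represented by \<open>\<epsilon>\<^sub>1 + \<dots> + \<epsilon>\<^sub>s\<close> (and \<open>\<omega>\<^sub>e = \<omega>\<^sub>0\<close> by \<open>0\<close>).\<close>
definition eps_coord :: "nat \<Rightarrow> (nat \<Rightarrow> int) \<Rightarrow> (nat \<Rightarrow> int) \<Rightarrow> nat \<Rightarrow> int" where
  "eps_coord e Lam b r = (\<Sum>s\<in>{r..<e}. Lam s) - b r + b (cyc_pred e r)"

lemma pairing_eq_eps_coord_diff:
  assumes "e \<ge> 2" "1 \<le> i" "i < e"
  shows "pairing e Lam b i = eps_coord e Lam b i - eps_coord e Lam b (i + 1)"
  using assms pairing_cyclic[of e i Lam b]
  by (simp add: eps_coord_def cyc_pred_def cyc_succ_def sum.atLeast_Suc_lessThan)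

lemma pairing_last_eq_eps_coord_diff:
  assumes "e \<ge> 2"
  shows "pairing e Lam b e = level e Lam + eps_coord e Lam b e - eps_coord e Lam b 1"
proof -
  have "{1..e} = insert e {1..<e}" using assms by auto
  then show ?thesis
    using assms pairing_cyclic[of e e Lam b]
    by (simp add: level_def eps_coord_def cyc_pred_def cyc_succ_def)
qed

lemma sum_eps_coord:
  "e \<ge> 2 \<Longrightarrow> (\<Sum>r\<in>{1..e}. eps_coord e Lam b r) = (\<Sum>r\<in>{1..e}. \<Sum>s\<in>{r..<e}. Lam s)"
  unfolding eps_coord_def using sum_cyc_pred_reindex[of e b]
  by (simp add: sum.distrib sum_subtractf)

lemma eps_coord_srefl:
  assumes e: "e \<ge> 2" and i: "i \<in> {1..e}" and r: "r \<in> {1..e}"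
  shows "eps_coord e Lam (srefl e Lam i b) r = eps_coord e Lam b r
     - (if r = i then pairing e Lam b i else 0) + (if r = cyc_succ e i then pairing e Lam b i else 0)"
  using cyc_pred_eq_iff[OF e i r] cyc_succ_neq[OF e i] by (auto simp: eps_coord_def srefl_def)

lemma eps_coord_srefl_mod:
  assumes e: "e \<ge> 2" and i: "i \<in> {1..e}" and r: "r \<in> {1..e}"
  shows "eps_coord e Lam (srefl e Lam i b) r mod level e Lam
       = eps_coord e Lam b (transpose i (cyc_succ e i) r) mod level e Lam"
proof (cases "i = e")
  case True
  then have "cyc_succ e i = 1" "i \<noteq> 1" using e by (auto simp: cyc_succ_def)
  then show ?thesis
    using eps_coord_srefl[OF e i r, of Lam b] pairing_last_eq_eps_coord_diff[OF e, of Lam b] True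
    by (auto simp: transpose_def)
next
  case False
  then have "cyc_succ e i = i + 1" "1 \<le> i" "i < e" using i by (auto simp: cyc_succ_def)
  then show ?thesis
    using eps_coord_srefl[OF e i r, of Lam b] pairing_eq_eps_coord_diff[OF e, of i Lam b]
    by (auto simp: transpose_def)
qed

lemma sum_eq_off_support:
  fixes g g' :: "'a \<Rightarrow> 'b::ab_group_add"
  assumes "finite A" "B \<subseteq> A" "\<And>r. r \<in> A - B \<Longrightarrow> g' r = g r"
  shows "sum g' A = sum g A + (\<Sum>r\<in>B. g' r - g r)"
proof -
  have "sum g' A - sum g A = (\<Sum>r\<in>A. g' r - g r)" by (simp add: sum_subtractf)
  also have "\<dots> = (\<Sum>r\<in>B. g' r - g r)"
    using assms by (intro sum.mono_neutral_right) (auto intro: finite_subset)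
  finally show ?thesis by (simp add: algebra_simps)
qed

definition lam_inner :: "nat \<Rightarrow> (nat \<Rightarrow> int) \<Rightarrow> (nat \<Rightarrow> int) \<Rightarrow> int" where
  "lam_inner e Lam b = (\<Sum>r\<in>{1..e}. Lam r * b r)"

definition root_norm :: "nat \<Rightarrow> (nat \<Rightarrow> int) \<Rightarrow> int" where
  "root_norm e b = (\<Sum>r\<in>{1..e}. (b r - b (cyc_pred e r))\<^sup>2)"

text \<open>With \<open>\<beta> = \<Sum> b\<^sub>r \<alpha>\<^sub>r\<close> we have \<open>(\<Lambda>|\<beta>) = lam_inner\<close> and \<open>(\<beta>|\<beta>) = root_norm\<close>, so
  this is \<open>|\<Lambda>|\<^sup>2 - |\<Lambda> - \<beta>|\<^sup>2\<close>.\<close>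
definition norm_defect :: "nat \<Rightarrow> (nat \<Rightarrow> int) \<Rightarrow> (nat \<Rightarrow> int) \<Rightarrow> int" where
  "norm_defect e Lam b = 2 * lam_inner e Lam b - root_norm e b"

definition eps_residues :: "nat \<Rightarrow> (nat \<Rightarrow> int) \<Rightarrow> (nat \<Rightarrow> int) \<Rightarrow> int multiset" where
  "eps_residues e Lam b = image_mset (\<lambda>r. eps_coord e Lam b r mod level e Lam) (mset_set {1..e})"

lemma sum_srefl:
  "i \<in> {1..e} \<Longrightarrow> (\<Sum>r\<in>{1..e}. srefl e Lam i b r) = (\<Sum>r\<in>{1..e}. b r) + pairing e Lam b i"
  by (subst sum_eq_off_support[where B = "{i}"]) (auto simp: srefl_def)

lemma lam_inner_srefl:
  "i \<in> {1..e} \<Longrightarrow> lam_inner e Lam (srefl e Lam i b) = lam_inner e Lam b + Lam i * pairing e Lam b i"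
  unfolding lam_inner_def
  by (subst sum_eq_off_support[where B = "{i}"]) (auto simp: srefl_def algebra_simps)

lemma root_norm_srefl:
  fixes Lam b :: "nat \<Rightarrow> int"
  assumes e: "e \<ge> 2" and i: "i \<in> {1..e}"
  defines "p \<equiv> pairing e Lam b i"
  shows "root_norm e (srefl e Lam i b) = root_norm e b
    + ((b i + p - b (cyc_pred e i))\<^sup>2 - (b i - b (cyc_pred e i))\<^sup>2)
    + ((b (cyc_succ e i) - b i - p)\<^sup>2 - (b (cyc_succ e i) - b i)\<^sup>2)"
proof -
  have pred_succ: "cyc_pred e (cyc_succ e i) = i"
    using e i by (auto simp: cyc_pred_def cyc_succ_def)
  have "cyc_pred e i \<noteq> i" "cyc_succ e i \<in> {1..e}"
    using e i by (auto simp: cyc_pred_def cyc_succ_def)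
  then show ?thesis
    unfolding root_norm_def p_def
    using cyc_succ_neq[OF e i] cyc_pred_eq_iff[OF e i] i
    by (subst sum_eq_off_support[where B = "{i, cyc_succ e i}"])
       (auto simp: srefl_def diff_diff_eq pred_succ)
qed

lemma norm_defect_srefl:
  assumes e: "e \<ge> 2" and i: "i \<in> {1..e}"
  shows "norm_defect e Lam (srefl e Lam i b) = norm_defect e Lam b"
  unfolding norm_defect_def lam_inner_srefl[OF i] root_norm_srefl[OF e i] pairing_cyclic[OF e i]
  by (simp add: power2_eq_square algebra_simps)

lemma eps_residues_srefl:
  assumes e: "e \<ge> 2" and i: "i \<in> {1..e}"
  shows "eps_residues e Lam (srefl e Lam i b) = eps_residues e Lam b"
proof -
  let ?\<tau> = "transpose i (cyc_succ e i)" and ?res = "\<lambda>r. eps_coord e Lam b r mod level e Lam"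
  have "image_mset ?\<tau> (mset_set {1..e}) = mset_set {1..e}"
    using i cyc_succ_in[OF e i] by (simp add: image_mset_mset_set[OF inj_on_transpose])
  then have "image_mset (?res \<circ> ?\<tau>) (mset_set {1..e}) = image_mset ?res (mset_set {1..e})"
    by (metis multiset.map_comp)
  moreover have "eps_residues e Lam (srefl e Lam i b) = image_mset (?res \<circ> ?\<tau>) (mset_set {1..e})"
    unfolding eps_residues_def using eps_coord_srefl_mod[OF e i] by (intro image_mset_cong) auto
  ultimately show ?thesis unfolding eps_residues_def by simp
qed

section \<open>Descent to a dominant weight\<close>

lemma abs_le_power2_int: "\<bar>x::int\<bar> \<le> x\<^sup>2"
proof (cases "x = 0")
  case False
  then have "\<bar>x\<bar> * 1 \<le> \<bar>x\<bar> * \<bar>x\<bar>" by (intro mult_left_mono) auto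
  then show ?thesis by (simp add: power2_eq_square abs_mult[symmetric])
qed simp

lemma root_norm_nonneg: "root_norm e b \<ge> 0"
  unfolding root_norm_def by (intro sum_nonneg) auto

lemma coeff_diff_le_root_norm:
  assumes r: "r \<in> {1..e}"
  shows "\<bar>b r - b 1\<bar> \<le> root_norm e b"
proof -
  have telescope: "\<bar>b n - b 1\<bar> \<le> (\<Sum>t\<in>{2..n}. \<bar>b t - b (t - 1)\<bar>)" if "1 \<le> n" for n
    using that
  proof (induction n rule: nat_induct_at_least)
    case (Suc n)
    have "{2..Suc n} = insert (Suc n) {2..n}" using Suc by auto
    then show ?case using Suc by simp
  qed simp
  have "\<bar>b r - b 1\<bar> \<le> (\<Sum>t\<in>{2..r}. \<bar>b t - b (t - 1)\<bar>)" using telescope r by simp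
  also have "\<dots> = (\<Sum>t\<in>{2..r}. \<bar>b t - b (cyc_pred e t)\<bar>)"
    by (intro sum.cong) (auto simp: cyc_pred_def)
  also have "\<dots> \<le> (\<Sum>t\<in>{1..e}. \<bar>b t - b (cyc_pred e t)\<bar>)"
    using r by (intro sum_mono2) auto
  also have "\<dots> \<le> root_norm e b"
    unfolding root_norm_def by (intro sum_mono abs_le_power2_int)
  finally show ?thesis .
qed

text \<open>Positivity of the level forces some coefficient to be \<open>\<ge> -|norm_defect|\<close>, because
  \<open>root_norm = 2 lam_inner - norm_defect \<ge> 0\<close>; \<open>root_norm\<close> bounds how far the others lie below it.\<close>
lemma coeff_lower_bound:
  assumes Lam: "\<forall>i\<in>{1..e}. Lam i \<ge> 0" and k: "level e Lam \<ge> 1" and r: "r \<in> {1..e}"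
  shows "b r \<ge> - \<bar>norm_defect e Lam b\<bar> - 2 * root_norm e b"
proof -
  let ?D = "norm_defect e Lam b"
  have "\<exists>s\<in>{1..e}. b s \<ge> - \<bar>?D\<bar>"
  proof (rule ccontr)
    assume "\<not> ?thesis"
    then have "\<forall>s\<in>{1..e}. b s \<le> - \<bar>?D\<bar> - 1" by force
    then have "lam_inner e Lam b \<le> (\<Sum>s\<in>{1..e}. Lam s * (- \<bar>?D\<bar> - 1))"
      unfolding lam_inner_def using Lam by (intro sum_mono mult_left_mono) auto
    also have "\<dots> = level e Lam * (- \<bar>?D\<bar> - 1)"
      unfolding level_def by (simp add: sum_distrib_right)
    also have "\<dots> \<le> 1 * (- \<bar>?D\<bar> - 1)"
      using k by (intro mult_right_mono_neg) auto
    finally show False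
      using root_norm_nonneg[of e b] unfolding norm_defect_def by simp
  qed
  then obtain s where "s \<in> {1..e}" "b s \<ge> - \<bar>?D\<bar>" by blast
  then show ?thesis
    using coeff_diff_le_root_norm[OF r, of b] coeff_diff_le_root_norm[of s e b] by arith
qed

text \<open>Reflecting at an index with negative pairing lowers \<open>\<Sum> b\<^sub>r\<close> and does not raise
  \<open>lam_inner\<close>; since \<open>norm_defect\<close> is invariant, \<open>root_norm\<close> stays bounded, which bounds
  \<open>\<Sum> b\<^sub>r\<close> from below.\<close>
lemma exists_dominant_below:
  assumes e: "e \<ge> 2" and Lam: "\<forall>i\<in>{1..e}. Lam i \<ge> 0" and k: "level e Lam \<ge> 1"
  shows "\<exists>b'. dominant e Lam b' \<and> norm_defect e Lam b' = norm_defect e Lam b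
    \<and> eps_residues e Lam b' = eps_residues e Lam b \<and> (\<forall>r\<in>{1..e}. b' r \<le> b r)"
proof -
  define D where "D = norm_defect e Lam b"
  define K where "K = lam_inner e Lam b"
  define C where "C = \<bar>D\<bar> + 2 * (2 * K - D)"
  have "\<exists>b'. dominant e Lam b' \<and> norm_defect e Lam b' = D
      \<and> eps_residues e Lam b' = eps_residues e Lam c \<and> (\<forall>r\<in>{1..e}. b' r \<le> c r)"
    if "norm_defect e Lam c = D" "lam_inner e Lam c \<le> K" for c
    using that
  proof (induction "nat ((\<Sum>r\<in>{1..e}. c r) + int e * C)" arbitrary: c rule: less_induct)
    case less
    show ?case
    proof (cases "dominant e Lam c")
      case False
      then obtain i where i: "i \<in> {1..e}" and p: "pairing e Lam c i < 0"
        unfolding dominant_def by force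
      define c' where "c' = srefl e Lam i c"
      have D': "norm_defect e Lam c' = D"
        using norm_defect_srefl[OF e i] less.prems unfolding c'_def by simp
      have "Lam i * pairing e Lam c i \<le> 0" using Lam i p by (simp add: mult_nonneg_nonpos)
      then have K': "lam_inner e Lam c' \<le> K"
        using lam_inner_srefl[OF i] less.prems unfolding c'_def by fastforce
      have "root_norm e c' \<le> 2 * K - D" using D' K' unfolding norm_defect_def by simp
      then have "\<forall>r\<in>{1..e}. c' r \<ge> - C"
        using coeff_lower_bound[OF Lam k, of _ c'] D' unfolding C_def by fastforce
      then have "(\<Sum>r\<in>{1..e}. c' r) \<ge> (\<Sum>r\<in>{1..e}. - C)" by (intro sum_mono) auto
      moreover have "(\<Sum>r\<in>{1..e}. c' r) = (\<Sum>r\<in>{1..e}. c r) + pairing e Lam c i"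
        unfolding c'_def by (rule sum_srefl[OF i])
      ultimately have "nat ((\<Sum>r\<in>{1..e}. c' r) + int e * C) < nat ((\<Sum>r\<in>{1..e}. c r) + int e * C)"
        using p by simp
      then obtain b' where b': "dominant e Lam b'" "norm_defect e Lam b' = D"
          "eps_residues e Lam b' = eps_residues e Lam c'" "\<forall>r\<in>{1..e}. b' r \<le> c' r"
        using less.hyps D' K' by blast
      have "\<forall>r\<in>{1..e}. c' r \<le> c r" using p unfolding c'_def srefl_def by simp
      then show ?thesis
        using b' eps_residues_srefl[OF e i] unfolding c'_def by force
    qed (use less.prems in auto)
  qed
  then show ?thesis unfolding D_def K_def by blast
qed

section \<open>Dominant weights are determined by the invariants\<close>

lemma image_mset_mod_shift_eq:
  fixes y y' :: "'a \<Rightarrow> int"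
  assumes "image_mset (\<lambda>r. y r mod k) M = image_mset (\<lambda>r. y' r mod k) M"
  shows "image_mset (\<lambda>r. c + (y r - c) mod k) M = image_mset (\<lambda>r. c + (y' r - c) mod k) M"
proof -
  have "image_mset (\<lambda>r. c + (z r - c) mod k) M
      = image_mset (\<lambda>\<rho>. c + (\<rho> - c) mod k) (image_mset (\<lambda>r. z r mod k) M)" for z :: "'a \<Rightarrow> int"
    by (simp add: multiset.map_comp o_def mod_diff_left_eq)
  then show ?thesis using assms by simp
qed

text \<open>Compare both families with the representatives \<open>s' + (v - s') mod k\<close> of their residues:
  these lie above every \<open>y r\<close>, strictly above \<open>y a\<close>, and below every \<open>y' r\<close>.\<close>
lemma window_sum_less:
  fixes y y' :: "'a \<Rightarrow> int"
  assumes A: "finite A" and k: "k > 0"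
    and y: "\<forall>r\<in>A. s \<le> y r \<and> y r \<le> s + k" and a: "a \<in> A" "y a = s"
    and y': "\<forall>r\<in>A. s' \<le> y' r \<and> y' r \<le> s' + k" and s: "s < s'"
    and res: "image_mset (\<lambda>r. y r mod k) (mset_set A) = image_mset (\<lambda>r. y' r mod k) (mset_set A)"
  shows "sum y A < sum y' A"
proof -
  define rep where "rep v = s' + (v - s') mod k" for v
  have "y r \<le> rep (y r)" if "r \<in> A" for r
  proof (cases "y r < s'")
    case True
    then show ?thesis using k unfolding rep_def by (smt (verit) pos_mod_sign)
  next
    case False
    then have "(y r - s') mod k = y r - s'" using y that s by (intro mod_pos_pos_trivial) auto
    then show ?thesis unfolding rep_def by simp
  qed
  moreover have "y a < rep (y a)" using a s k unfolding rep_def by (smt (verit) pos_mod_sign)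
  ultimately have "sum y A < sum (\<lambda>r. rep (y r)) A"
    using A a by (intro sum_strict_mono_ex1) auto
  also have "\<dots> = sum (\<lambda>r. rep (y' r)) A"
    using image_mset_mod_shift_eq[OF res, of s'] by (simp add: sum_unfold_sum_mset rep_def)
  also have "\<dots> \<le> sum y' A"
    using y' unfolding rep_def by (intro sum_mono) (smt (verit) zmod_le_nonneg_dividend)
  finally show ?thesis .
qed

lemma window_image_mset:
  fixes y :: "'a \<Rightarrow> int"
  assumes A: "finite A" and k: "k > 0" and y: "\<forall>r\<in>A. s \<le> y r \<and> y r \<le> s + k"
  defines "c \<equiv> card {r\<in>A. y r = s + k}"
  shows "image_mset y (mset_set A)
      = replicate_mset c (s + k) + (image_mset (\<lambda>r. s + (y r - s) mod k) (mset_set A) - replicate_mset c s)"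
    and "sum y A = (\<Sum>r\<in>A. s + (y r - s) mod k) + k * int c"
proof -
  let ?top = "\<lambda>r. y r = s + k" and ?rep = "\<lambda>r. s + (y r - s) mod k"
  let ?T = "filter_mset ?top (mset_set A)" and ?R = "filter_mset (\<lambda>r. \<not> ?top r) (mset_set A)"
  have split: "image_mset f (mset_set A) = image_mset f ?T + image_mset f ?R" for f :: "'a \<Rightarrow> int"
    using multiset_partition[of "mset_set A" ?top] by (metis image_mset_union)
  have const: "image_mset f M = replicate_mset (size M) v" if "\<And>x. x \<in># M \<Longrightarrow> f x = v"
    for f :: "'a \<Rightarrow> int" and M v
    using image_mset_cong[of M f "\<lambda>_. v"] that by (simp add: image_mset_const_eq)
  have "size ?T = c" using A unfolding c_def by simp
  then have "image_mset y ?T = replicate_mset c (s + k)" "image_mset ?rep ?T = replicate_mset c s"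
    using k by (auto intro!: const)
  moreover have "image_mset ?rep ?R = image_mset y ?R"
    using A y k by (intro image_mset_cong) (auto simp: mod_pos_pos_trivial)
  ultimately have y_eq: "image_mset y (mset_set A) = replicate_mset c (s + k) + image_mset y ?R"
    and rep_eq: "image_mset ?rep (mset_set A) = replicate_mset c s + image_mset y ?R"
    using split[of y] split[of ?rep] by simp_all
  from y_eq rep_eq show "image_mset y (mset_set A)
      = replicate_mset c (s + k) + (image_mset ?rep (mset_set A) - replicate_mset c s)"
    by simp
  from y_eq rep_eq show "sum y A = sum ?rep A + k * int c"
    by (simp add: sum_unfold_sum_mset algebra_simps)
qed

lemma window_image_mset_eq:
  fixes y y' :: "'a \<Rightarrow> int"
  assumes A: "finite A" and k: "k > 0"
    and y: "\<forall>r\<in>A. s \<le> y r \<and> y r \<le> s + k" and y': "\<forall>r\<in>A. s \<le> y' r \<and> y' r \<le> s + k"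
    and res: "image_mset (\<lambda>r. y r mod k) (mset_set A) = image_mset (\<lambda>r. y' r mod k) (mset_set A)"
    and sum: "sum y A = sum y' A"
  shows "image_mset y (mset_set A) = image_mset y' (mset_set A)"
proof -
  have rep: "image_mset (\<lambda>r. s + (y r - s) mod k) (mset_set A)
      = image_mset (\<lambda>r. s + (y' r - s) mod k) (mset_set A)"
    by (rule image_mset_mod_shift_eq[OF res])
  then have "sum (\<lambda>r. s + (y r - s) mod k) A = sum (\<lambda>r. s + (y' r - s) mod k) A"
    by (simp add: sum_unfold_sum_mset)
  then have card: "card {r\<in>A. y r = s + k} = card {r\<in>A. y' r = s + k}"
    using window_image_mset(2)[OF A k y] window_image_mset(2)[OF A k y'] sum k by simp
  show ?thesis
    by (subst window_image_mset(1)[OF A k y], subst window_image_mset(1)[OF A k y'])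
       (simp only: rep card)
qed

lemma antimono_on_eq_if_image_mset_eq:
  fixes y y' :: "nat \<Rightarrow> int"
  assumes "antimono_on {1..e} y" "antimono_on {1..e} y'"
    and "image_mset y (mset_set {1..e}) = image_mset y' (mset_set {1..e})"
    and r: "r \<in> {1..e}"
  shows "y r = y' r"
proof -
  define L where "L z = map (\<lambda>r. - z r) [1..<e+1]" for z :: "nat \<Rightarrow> int"
  have sorted: "sorted (L y)" "sorted (L y')"
    using assms(1,2) by (auto simp: L_def sorted_iff_nth_mono monotone_on_def simp del: upt_Suc)
  have "mset (L z) = image_mset uminus (image_mset z (mset_set {1..e}))" for z
    by (simp add: L_def mset_upt multiset.map_comp o_def atLeastLessThanSuc_atLeastAtMost del: upt_Suc)
  then have "mset (L y) = mset (L y')" using assms(3) by simp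
  then have "L y = L y'"
    using properties_for_sort[OF _ sorted(1)] sorted_sort_id[OF sorted(2)] by metis
  moreover have "r - 1 < length [1..<e+1]" "[1..<e+1] ! (r - 1) = r"
    using r by (auto simp del: upt_Suc)
  ultimately have "- y r = - y' r" unfolding L_def by (metis nth_map)
  then show ?thesis by simp
qed

lemma dominant_eps_coord_antimono:
  assumes e: "e \<ge> 2" and d: "dominant e Lam b"
  shows "antimono_on {1..e} (eps_coord e Lam b)"
  unfolding monotone_on_def
proof (intro ballI impI)
  fix i j :: nat assume i: "i \<in> {1..e}" and j: "j \<in> {1..e}" and "i \<le> j"
  from \<open>i \<le> j\<close> show "eps_coord e Lam b j \<le> eps_coord e Lam b i"
  proof (induction j rule: dec_induct)
    case (step n)
    then have "1 \<le> n" "n < e" using i j by auto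
    moreover from this have "pairing e Lam b n \<ge> 0" using d unfolding dominant_def by auto
    ultimately show ?case using step.IH pairing_eq_eps_coord_diff[OF e, of n Lam b] by simp
  qed simp
qed

lemma dominant_eps_coord_window:
  assumes e: "e \<ge> 2" and d: "dominant e Lam b"
  shows "\<forall>r\<in>{1..e}. eps_coord e Lam b e \<le> eps_coord e Lam b r
    \<and> eps_coord e Lam b r \<le> eps_coord e Lam b e + level e Lam"
proof
  fix r assume r: "r \<in> {1..e}"
  have "eps_coord e Lam b e \<le> eps_coord e Lam b r" "eps_coord e Lam b r \<le> eps_coord e Lam b 1"
    using dominant_eps_coord_antimono[OF e d] r e unfolding monotone_on_def by auto
  moreover have "pairing e Lam b e \<ge> 0" using d e unfolding dominant_def by auto
  ultimately show "eps_coord e Lam b e \<le> eps_coord e Lam b r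
    \<and> eps_coord e Lam b r \<le> eps_coord e Lam b e + level e Lam"
    using pairing_last_eq_eps_coord_diff[OF e, of Lam b] by simp
qed

text \<open>Both coordinate families lie in windows \<open>[y\<^sub>e, y\<^sub>e + k]\<close> and have the same sum, so the
  windows start at the same point.\<close>
lemma dominant_eps_coord_eq:
  assumes e: "e \<ge> 2" and k: "level e Lam > 0"
    and d1: "dominant e Lam b1" and d2: "dominant e Lam b2"
    and res: "eps_residues e Lam b1 = eps_residues e Lam b2" and r: "r \<in> {1..e}"
  shows "eps_coord e Lam b1 r = eps_coord e Lam b2 r"
proof -
  let ?A = "{1..e}" and ?y1 = "eps_coord e Lam b1" and ?y2 = "eps_coord e Lam b2"
  have e_in: "e \<in> ?A" using e by simp
  note window1 = dominant_eps_coord_window[OF e d1] and window2 = dominant_eps_coord_window[OF e d2]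
  have res': "image_mset (\<lambda>r. ?y1 r mod level e Lam) (mset_set ?A)
      = image_mset (\<lambda>r. ?y2 r mod level e Lam) (mset_set ?A)"
    using res unfolding eps_residues_def .
  have sum: "sum ?y1 ?A = sum ?y2 ?A" using sum_eps_coord[OF e] by simp
  have "\<not> ?y1 e < ?y2 e"
    using window_sum_less[OF finite_atLeastAtMost k window1 e_in HOL.refl window2 _ res'] sum by linarith
  moreover have "\<not> ?y2 e < ?y1 e"
    using window_sum_less[OF finite_atLeastAtMost k window2 e_in HOL.refl window1 _ res'[symmetric]] sum
    by linarith
  ultimately have "?y2 e = ?y1 e" by simp
  then have "image_mset ?y1 (mset_set ?A) = image_mset ?y2 (mset_set ?A)"
    using window_image_mset_eq[OF finite_atLeastAtMost k window1 _ res' sum] window2 by simp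
  then show ?thesis
    using antimono_on_eq_if_image_mset_eq dominant_eps_coord_antimono[OF e d1]
      dominant_eps_coord_antimono[OF e d2] r by blast
qed

text \<open>Equal \<open>\<epsilon>\<close>-coordinates leave only a constant shift \<open>c\<close> between the coefficients, which
  changes \<open>lam_inner\<close> by \<open>c\<close> times the level and fixes \<open>root_norm\<close>.\<close>
lemma dominant_unique:
  assumes e: "e \<ge> 2" and k: "level e Lam > 0"
    and d1: "dominant e Lam b1" and d2: "dominant e Lam b2"
    and norm: "norm_defect e Lam b1 = norm_defect e Lam b2"
    and res: "eps_residues e Lam b1 = eps_residues e Lam b2" and r: "r \<in> {1..e}"
  shows "b1 r = b2 r"
proof -
  define c where "c r = b1 r - b2 r" for r
  have c_pred: "c t = c (cyc_pred e t)" if "t \<in> {1..e}" for t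
    using dominant_eps_coord_eq[OF e k d1 d2 res that] unfolding eps_coord_def c_def by simp
  have c_const: "c t = c 1" if "1 \<le> t" "t \<le> e" for t
    using that
  proof (induction t rule: nat_induct_at_least)
    case (Suc n)
    then show ?case using c_pred[of "Suc n"] by (simp add: cyc_pred_def)
  qed simp
  have "b1 t - b1 (cyc_pred e t) = b2 t - b2 (cyc_pred e t)" if "t \<in> {1..e}" for t
    using c_pred[OF that] unfolding c_def by simp
  then have "root_norm e b1 = root_norm e b2" unfolding root_norm_def by (intro sum.cong) auto
  then have "lam_inner e Lam b1 = lam_inner e Lam b2" using norm unfolding norm_defect_def by simp
  moreover have "lam_inner e Lam b1 = lam_inner e Lam b2 + c 1 * level e Lam"
  proof -
    have "b1 t = b2 t + c 1" if "t \<in> {1..e}" for t using c_const[of t] that unfolding c_def by auto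
    then have "lam_inner e Lam b1 = (\<Sum>t\<in>{1..e}. Lam t * b2 t + Lam t * c 1)"
      unfolding lam_inner_def by (intro sum.cong) (auto simp: distrib_left)
    then show ?thesis
      unfolding lam_inner_def level_def by (simp add: sum.distrib sum_distrib_left mult.commute)
  qed
  ultimately have "c 1 = 0" using k by simp
  then show ?thesis using c_const r unfolding c_def by auto
qed

section \<open>Weights of the orbit lie below \<open>\<Lambda>\<close>\<close>

lemma Vsupp_coeff_outside: "b \<in> Vsupp e Lam \<Longrightarrow> r \<notin> {1..e} \<Longrightarrow> b r = 0"
  by (induction rule: Vsupp.induct) (auto simp: srefl_def)

lemma Vsupp_invariants:
  assumes e: "e \<ge> 2" and b: "b \<in> Vsupp e Lam"
  shows "\<exists>\<mu>. dominant e Lam \<mu> \<and> (\<forall>r\<in>{1..e}. \<mu> r \<ge> 0) \<and> norm_defect e Lam \<mu> = norm_defect e Lam b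
    \<and> eps_residues e Lam \<mu> = eps_residues e Lam b"
  using b
proof (induction rule: Vsupp.induct)
  case (refl b i)
  then show ?case using norm_defect_srefl[OF e refl.hyps(2)] eps_residues_srefl[OF e refl.hyps(2)] by metis
qed auto

lemma sum_pairing:
  assumes e: "e \<ge> 2"
  shows "(\<Sum>i\<in>{1..e}. pairing e Lam b i) = level e Lam"
proof -
  have "(\<Sum>i\<in>{1..e}. pairing e Lam b i)
      = (\<Sum>i\<in>{1..e}. Lam i - 2 * b i + b (cyc_pred e i) + b (cyc_succ e i))"
    using pairing_cyclic[OF e] by (intro sum.cong) auto
  also have "\<dots> = level e Lam"
    using sum_cyc_pred_reindex[OF e, of b] sum_cyc_succ_reindex[OF e, of b]
    by (simp add: level_def sum.distrib sum_subtractf sum_distrib_left)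
  finally show ?thesis .
qed

lemma Vsupp_level_zero:
  assumes e: "e \<ge> 2" and k: "level e Lam = 0" and b: "b \<in> Vsupp e Lam"
  shows "dominant e Lam b \<and> (\<forall>r\<in>{1..e}. b r \<ge> 0)"
  using b
proof (induction rule: Vsupp.induct)
  case (refl b i)
  then have "\<forall>j\<in>{1..e}. pairing e Lam b j \<ge> 0" unfolding dominant_def by auto
  then have "\<forall>j\<in>{1..e}. pairing e Lam b j = 0"
    using sum_nonneg_eq_0_iff[of "{1..e}" "pairing e Lam b"] sum_pairing[OF e] k by auto
  then have "srefl e Lam i b = b" using refl.hyps(2) unfolding srefl_def by simp
  then show ?case using refl.IH by simp
qed auto

lemma Vsupp_coeff_nonneg:
  assumes e: "e \<ge> 2" and Lam: "\<forall>i\<in>{1..e}. Lam i \<ge> 0" and b: "b \<in> Vsupp e Lam" and r: "r \<in> {1..e}"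
  shows "b r \<ge> 0"
proof (cases "level e Lam = 0")
  case True
  then show ?thesis using Vsupp_level_zero[OF e True b] r by simp
next
  case False
  moreover have "level e Lam \<ge> 0" unfolding level_def using Lam by (intro sum_nonneg) auto
  ultimately have k: "level e Lam \<ge> 1" by simp
  obtain \<mu> where \<mu>: "dominant e Lam \<mu>" "\<forall>r\<in>{1..e}. \<mu> r \<ge> 0"
    "norm_defect e Lam \<mu> = norm_defect e Lam b" "eps_residues e Lam \<mu> = eps_residues e Lam b"
    using Vsupp_invariants[OF e b] by blast
  obtain b' where b': "dominant e Lam b'" "norm_defect e Lam b' = norm_defect e Lam b"
    "eps_residues e Lam b' = eps_residues e Lam b" "\<forall>r\<in>{1..e}. b' r \<le> b r"
    using exists_dominant_below[OF e Lam k] by blast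
  have "b' r = \<mu> r" using dominant_unique[OF e _ b'(1) \<mu>(1) _ _ r] k b'(2,3) \<mu>(3,4) by simp
  then show ?thesis using b'(4) \<mu>(2) r by force
qed

section \<open>The bound \<open>k\<^sup>+\<^sub>i\<^sub>j \<le> b\<^sub>i\<^sub>j\<close>\<close>

lemma bij_eq_Min_root_coeff:
  assumes i: "i \<in> {1..e}" and j: "j \<in> {1..e}" and ij: "i \<noteq> j"
  shows "bij e b i j = Min ((\<lambda>r. b r - root_coeff e i j 0 r) ` {1..e})"
proof (cases "i < j")
  case True
  have "{1..e} = {i..j-1} \<union> ({1..e} - {i..j-1})" using i j True by auto
  then have "(\<lambda>r. b r - root_coeff e i j 0 r) ` {1..e}
      = (\<lambda>r. b r - 1) ` {i..j-1} \<union> b ` ({1..e} - {i..j-1})"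
    using True by (auto simp: root_coeff_def image_Un intro!: image_cong)
  then show ?thesis using True unfolding bij_def by simp
next
  case False
  have "{1..e} = {j..i-1} \<union> ({1..e} - {j..i-1})" using i j False by auto
  then have "(\<lambda>r. b r - root_coeff e i j 0 r) ` {1..e}
      = (\<lambda>r. b r + 1) ` {j..i-1} \<union> b ` ({1..e} - {j..i-1})"
    using False by (auto simp: root_coeff_def image_Un intro!: image_cong)
  then show ?thesis using False unfolding bij_def by simp
qed

lemma shift_nonneg_iff_le_bij:
  assumes i: "i \<in> {1..e}" and j: "j \<in> {1..e}" and ij: "i \<noteq> j"
  shows "(\<forall>r\<in>{1..e}. shift e b i j n r \<ge> 0) \<longleftrightarrow> n \<le> bij e b i j"
proof -
  have "shift e b i j n r = (b r - root_coeff e i j 0 r) - n" if "r \<in> {1..e}" for r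
    using that by (simp add: shift_def root_coeff_def)
  then show ?thesis using i unfolding bij_eq_Min_root_coeff[OF i j ij] by (auto simp: Min_ge_iff)
qed

lemma kplus_default_le_bij:
  assumes i: "i \<in> {1..e}" and j: "j \<in> {1..e}" and ij: "i \<noteq> j" and b: "\<forall>r\<in>{1..e}. b r \<ge> 0"
  shows "(if i < j then -1 else 0) \<le> bij e b i j"
  unfolding bij_eq_Min_root_coeff[OF i j ij] using i b by (auto simp: Min_ge_iff root_coeff_def)

definition kplus_candidates :: "(nat \<Rightarrow> int) set \<Rightarrow> nat \<Rightarrow> (nat \<Rightarrow> int) \<Rightarrow> nat \<Rightarrow> nat \<Rightarrow> int set" where
  "kplus_candidates S e b i j = {if i < j then -1 else 0} \<union> {n. pos_real_root e i j n \<and> shift e b i j n \<in> S}"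

lemma kplus_eq_Max: "kplus S e b i j = Max (kplus_candidates S e b i j)"
  unfolding kplus_def kplus_candidates_def ..

lemma kplus_candidates_le_bij:
  assumes e: "e \<ge> 2" and Lam: "\<forall>i\<in>{1..e}. Lam i \<ge> 0" and b: "b \<in> Vsupp e Lam"
    and i: "i \<in> {1..e}" and j: "j \<in> {1..e}" and ij: "i \<noteq> j"
    and n: "n \<in> kplus_candidates (Vsupp e Lam) e b i j"
  shows "n \<le> bij e b i j"
  using n unfolding kplus_candidates_def
  using kplus_default_le_bij[OF i j ij] Vsupp_coeff_nonneg[OF e Lam b]
    Vsupp_coeff_nonneg[OF e Lam] shift_nonneg_iff_le_bij[OF i j ij]
  by blast

lemma kplus_candidates_finite:
  assumes e: "e \<ge> 2" and Lam: "\<forall>i\<in>{1..e}. Lam i \<ge> 0" and b: "b \<in> Vsupp e Lam"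
    and i: "i \<in> {1..e}" and j: "j \<in> {1..e}" and ij: "i \<noteq> j"
  shows "finite (kplus_candidates (Vsupp e Lam) e b i j)"
proof -
  have "{n. pos_real_root e i j n \<and> shift e b i j n \<in> Vsupp e Lam} \<subseteq> {0..bij e b i j}"
    using kplus_candidates_le_bij[OF e Lam b i j ij]
    by (auto simp: kplus_candidates_def pos_real_root_def split: if_splits)
  then show ?thesis unfolding kplus_candidates_def by (auto intro: finite_subset)
qed

lemma kplus_le_bij:
  assumes e: "e \<ge> 2" and Lam: "\<forall>i\<in>{1..e}. Lam i \<ge> 0" and b: "b \<in> Vsupp e Lam"
    and i: "i \<in> {1..e}" and j: "j \<in> {1..e}" and ij: "i \<noteq> j"
  shows "kplus (Vsupp e Lam) e b i j \<le> bij e b i j"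
  unfolding kplus_eq_Max
  using kplus_candidates_finite[OF e Lam b i j ij] kplus_candidates_le_bij[OF e Lam b i j ij]
  by (subst Max_le_iff) (auto simp: kplus_candidates_def)

lemma kplus_eq_bij:
  assumes e: "e \<ge> 2" and Lam: "\<forall>i\<in>{1..e}. Lam i \<ge> 0" and b: "b \<in> Vsupp e Lam"
    and i: "i \<in> {1..e}" and j: "j \<in> {1..e}" and ij: "i \<noteq> j"
    and dom: "pos_real_root e i j (bij e b i j) \<Longrightarrow> dominant e Lam (shift e b i j (bij e b i j))"
  shows "kplus (Vsupp e Lam) e b i j = bij e b i j"
proof -
  let ?m = "bij e b i j"
  have b_nonneg: "\<forall>r\<in>{1..e}. b r \<ge> 0" using Vsupp_coeff_nonneg[OF e Lam b] by blast
  have "?m \<in> kplus_candidates (Vsupp e Lam) e b i j"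
  proof (cases "pos_real_root e i j ?m")
    case True
    have "\<forall>r\<in>{1..e}. shift e b i j ?m r \<ge> 0" using shift_nonneg_iff_le_bij[OF i j ij] by simp
    moreover have "\<forall>r. r \<notin> {1..e} \<longrightarrow> shift e b i j ?m r = 0"
      using Vsupp_coeff_outside[OF b] by (simp add: shift_def root_coeff_def)
    ultimately have "shift e b i j ?m \<in> Vsupp e Lam" using Vsupp.base dom True by blast
    then show ?thesis using True unfolding kplus_candidates_def by simp
  next
    case False
    then have "?m < (if i < j then 0 else 1)" using i j ij unfolding pos_real_root_def by auto
    then show ?thesis
      using kplus_default_le_bij[OF i j ij b_nonneg] unfolding kplus_candidates_def
      by (auto split: if_splits)
  qed
  then show ?thesis
    unfolding kplus_eq_Max
    using Max_eqI[OF kplus_candidates_finite[OF e Lam b i j ij]] kplus_candidates_le_bij[OF e Lam b i j ij]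
    by blast
qed

theorem corollary4p5:
  fixes e :: nat and Lam :: "nat \<Rightarrow> int" and S :: "(nat \<Rightarrow> int) set" and b :: "nat \<Rightarrow> int"
  assumes "e \<ge> 2"
    and "\<forall>i\<in>{1..e}. Lam i \<ge> 0"
    and "S = Vsupp e Lam"
    and "b \<in> S"
    and "dominant e Lam b"
  shows "(\<forall>i\<in>{1..e}. \<forall>j\<in>{1..e}. i \<noteq> j \<longrightarrow> kplus S e b i j \<le> bij e b i j)
       \<and> ((\<forall>i j n. pos_real_root e i j n \<longrightarrow> dominant e Lam (shift e b i j n)) \<longrightarrow>
           (\<forall>i\<in>{1..e}. \<forall>j\<in>{1..e}. i \<noteq> j \<longrightarrow> kplus S e b i j = bij e b i j))"
  using kplus_le_bij[OF assms(1,2)] kplus_eq_bij[OF assms(1,2)] assms(3,4) by blast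

end
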